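(* Let $n\ge2$ and let $E$ be a non-empty subset of $\bar\Delta^{(n)}$. There exists a generalized $n$-system $\mathbf{P}$ on $[1,\infty)$ such that, for each $j=1,\dots,n$, \[ \liminf_{q\to\infty}\psi_j\big(q^{-1}\mathbf{P}(q)\big)=\inf\psi_j(E)\quad\text{and}\quad \limsup_{q\to\infty}\psi_j\big(q^{-1}\mathbf{P}(q)\big)=\frac{j}{n}. \]
   Context: $\bar\Delta^{(n)}=\{(a_1,\dots,a_n)\in\mathbb{R}^n: 0\le a_1\le\cdots\le a_n,\ a_1+\cdots+a_n=1\}$; for $j=1,\dots,n$, $\psi_j\colon\bar\Delta^{(n)}\to\mathbb{R}$ is $\psi_j(a_1,\dots,a_n)=a_1+\cdots+a_j$. A map $\mathbf{P}\colon I\to\mathbb{R}^n$ on an interval $I\subseteq[0,\infty)$ with non-empty interior is continuous piecewise linear if it is continuous, the set of points of $I$ where it is not differentiable (including endpoints of $I$ lying in $I$) is discrete in $I$, and its derivative is locally constant off that set. A generalized $n$-system on $I$ is a continuous piecewise linear map $\mathbf{P}=(P_1,\dots,P_n)\colon I\to\mathbb{R}^n$ such that: (G1) for each $q\in I$, $0\le P_1(q)\le\cdots\le P_n(q)$ and $P_1(q)+\cdots+P_n(q)=q$; (G2) on each non-empty open subinterval $H$ of $I$ on which $\mathbf{P}$ is differentiable, there are integers $1\le \underline{r}\le\overline{r}\le n$ such that $P_{\underline r},\dots,P_{\overline r}$ coincide on $H$ and have slope $1/(\overline r-\underline r+1)$, while every other $P_j$ is constant on $H$; (G3) if $q$ is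 an interior point of $I$ where $\mathbf{P}$ is not differentiable, and $\underline r,\overline r,\underline s,\overline s$ are the integers with $P_j'(q^-)=1/(\overline r-\underline r+1)$ for $\underline r\le j\le\overline r$ and $P_j'(q^+)=1/(\overline s-\underline s+1)$ for $\underline s\le j\le \overline s$, and if $\underline r<\overline s$, then $P_{\underline r}(q)=\cdots=P_{\overline s}(q)$. *)

theory Defs
  imports "HOL-Analysis.Analysis"
begin

text \<open>Points of R^n are encoded as functions nat => real, coordinates indexed by 1..n,
  vanishing outside {1..n}. A map P : I -> R^n is encoded as P :: nat => real => real,
  where P j q is the j-th coordinate of P(q).\<close>

definition closedDelta :: "nat \<Rightarrow> (nat \<Rightarrow> real) set" where
  "closedDelta n = {a. (\<forall>i. i \<notin> {1..n} \<longrightarrow> a i = 0) \<and> 0 \<le> a 1 \<and>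
      (\<forall>i. 1 \<le> i \<and> i < n \<longrightarrow> a i \<le> a (Suc i)) \<and> (\<Sum>i=1..n. a i) = 1}"

definition psi :: "nat \<Rightarrow> (nat \<Rightarrow> real) \<Rightarrow> real" where
  "psi j a = (\<Sum>i=1..j. a i)"

definition nondiff_pts :: "nat \<Rightarrow> real set \<Rightarrow> (nat \<Rightarrow> real \<Rightarrow> real) \<Rightarrow> real set" where
  "nondiff_pts n I P = {q \<in> I. q \<notin> interior I \<or> \<not> (\<forall>j\<in>{1..n}. P j differentiable (at q))}"

definition cont_pw_linear :: "nat \<Rightarrow> real set \<Rightarrow> (nat \<Rightarrow> real \<Rightarrow> real) \<Rightarrow> bool" where
  "cont_pw_linear n I P \<longleftrightarrow>
     (\<forall>j\<in>{1..n}. continuous_on I (P j)) \<and>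
     (\<forall>q\<in>I. \<exists>e>0. \<forall>x\<in>nondiff_pts n I P. x \<noteq> q \<longrightarrow> e \<le> \<bar>x - q\<bar>) \<and>
     (\<forall>q\<in>I - nondiff_pts n I P. \<exists>e>0. \<forall>x. \<bar>x - q\<bar> < e \<longrightarrow>
         x \<in> I - nondiff_pts n I P \<and> (\<forall>j\<in>{1..n}. deriv (P j) x = deriv (P j) q))"

definition gen_n_system :: "nat \<Rightarrow> real set \<Rightarrow> (nat \<Rightarrow> real \<Rightarrow> real) \<Rightarrow> bool" where
  "gen_n_system n I P \<longleftrightarrow>
     cont_pw_linear n I P \<and>
     \<comment> \<open>(G1)\<close>
     (\<forall>q\<in>I. 0 \<le> P 1 q \<and> (\<forall>j. 1 \<le> j \<and> j < n \<longrightarrow> P j q \<le> P (Suc j) q) \<and>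
        (\<Sum>j=1..n. P j q) = q) \<and>
     \<comment> \<open>(G2)\<close>
     (\<forall>H. H \<noteq> {} \<and> open H \<and> is_interval H \<and> H \<subseteq> I \<and>
          (\<forall>x\<in>H. \<forall>j\<in>{1..n}. P j differentiable (at x)) \<longrightarrow>
        (\<exists>rl rh. 1 \<le> rl \<and> rl \<le> rh \<and> rh \<le> n \<and>
           (\<forall>j\<in>{rl..rh}. \<forall>x\<in>H. P j x = P rl x \<and>
               (P j has_real_derivative 1 / real (rh - rl + 1)) (at x)) \<and>
           (\<forall>j\<in>{1..n} - {rl..rh}. \<forall>x\<in>H. \<forall>y\<in>H. P j x = P j y))) \<and>
     \<comment> \<open>(G3)\<close>
     (\<forall>q\<in>interior I. \<not> (\<forall>j\<in>{1..n}. P j differentiable (at q)) \<longrightarrow>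
        (\<forall>rl rh sl sh. 1 \<le> rl \<and> rl \<le> rh \<and> rh \<le> n \<and> 1 \<le> sl \<and> sl \<le> sh \<and> sh \<le> n \<and>
           (\<forall>j\<in>{1..n}. (P j has_real_derivative
               (if j \<in> {rl..rh} then 1 / real (rh - rl + 1) else 0)) (at q within {..q})) \<and>
           (\<forall>j\<in>{1..n}. (P j has_real_derivative
               (if j \<in> {sl..sh} then 1 / real (sh - sl + 1) else 0)) (at q within {q..})) \<and>
           rl < sh \<longrightarrow> (\<forall>j\<in>{rl..sh}. P j q = P rl q)))"

end

theory Submission
  imports Defs
begin

text \<open>
  Pick points \<open>a 0, a 1, \<dots>\<close> of \<open>E\<close> such that, for every \<open>j\<close>, infinitely
  many of the values \<open>psi j (a k)\<close> come within \<open>1/(k+1)\<close> of \<open>Inf (psi j ` E)\<close>.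
  The system \<open>P\<close> is a polygonal path, parametrized by the coordinate sum \<open>q\<close>, through
  a sequence of corners organised in epochs.  Epoch \<open>k\<close> starts at a point with all
  coordinates equal, where \<open>psi j (P q / q) = j / n\<close>; this is the largest value a sorted
  vector allows and yields the limsup.  Moving one block of equal coordinates at a
  time, the path then reaches the corner \<open>scale k * (1 + i + (k+1) * a k i)\<close>, whose
  normalisation is within \<open>O(1/k)\<close> of \<open>a k\<close>, and finally returns to equal coordinates.
  Along a segment \<open>psi j (P q / q)\<close> is a ratio of affine functions, hence monotone,
  and a comparison of the corners of an epoch shows that its minimum over the epoch
  is attained at that middle corner; this yields the liminf.
\<close>

text \<open>The derivative vector of a generalized \<open>n\<close>-system moving the block \<open>{l..h}\<close>.\<close>
definition slope :: "nat \<Rightarrow> nat \<Rightarrow> nat \<Rightarrow> real" where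
  "slope l h i = (if i \<in> {l..h} then 1 / real (h - l + 1) else 0)"

lemma sum_slope_initial:
  "(\<Sum>i=1..j. slope l h i) = real (card ({1..j} \<inter> {l..h})) / real (h - l + 1)"
proof -
  have "(\<Sum>i=1..j. slope l h i) = (\<Sum>i\<in>{1..j} \<inter> {l..h}. 1 / real (h - l + 1))"
    unfolding slope_def by (rule sum.inter_restrict[symmetric]) simp
  then show ?thesis by (simp only: sum_constant times_divide_eq_right mult_1_right)
qed

lemma sum_slope:
  assumes "1 \<le> l" "l \<le> h" "h \<le> n"
  shows "(\<Sum>i=1..n. slope l h i) = 1"
proof -
  have "{1..n} \<inter> {l..h} = {l..h}" using assms by auto
  then show ?thesis using sum_slope_initial[of l h n] assms by simp
qed

lemma slope_determines_block:
  assumes "1 \<le> l" "l \<le> h" "h \<le> n" "1 \<le> l'" "l' \<le> h'" "h' \<le> n"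
    and eq: "\<forall>i\<in>{1..n}. slope l h i = slope l' h' i"
  shows "l = l' \<and> h = h'"
proof (rule ccontr)
  assume ne: "\<not> (l = l' \<and> h = h')"
  have "\<exists>i\<in>{1..n}. (i \<in> {l..h}) \<noteq> (i \<in> {l'..h'})"
  proof (cases "l = l'")
    case True
    then show ?thesis using ne assms by (intro bexI[of _ "max h h'"]) auto
  next
    case False
    then show ?thesis using assms by (intro bexI[of _ "min l l'"]) auto
  qed
  then obtain i where "i \<in> {1..n}" "(i \<in> {l..h}) \<noteq> (i \<in> {l'..h'})" by blast
  moreover have "slope l h i = slope l' h' i" using eq \<open>i \<in> {1..n}\<close> by blast
  ultimately show False by (auto simp: slope_def split: if_splits)
qed

lemma sorted_range_mono:
  fixes a :: "nat \<Rightarrow> real"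
  assumes mono: "\<And>i. 1 \<le> i \<Longrightarrow> i < n \<Longrightarrow> a i \<le> a (Suc i)"
    and "1 \<le> i" "i \<le> k" "k \<le> n"
  shows "a i \<le> a k"
  using assms(3,4)
proof (induction k rule: dec_induct)
  case (step k)
  then show ?case using mono[of k] assms(2) by simp
qed simp

lemma sorted_initial_sum_le:
  fixes a :: "nat \<Rightarrow> real"
  assumes mono: "\<And>i. 1 \<le> i \<Longrightarrow> i < n \<Longrightarrow> a i \<le> a (Suc i)"
    and "j \<le> n"
  shows "real n * (\<Sum>i=1..j. a i) \<le> real j * (\<Sum>i=1..n. a i)"
proof (cases "j = 0")
  case False
  have le: "a i \<le> a k" if "1 \<le> i" "i \<le> k" "k \<le> n" for i k
    by (rule sorted_range_mono[where a=a, OF mono that])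
  have low: "(\<Sum>i=1..j. a i) \<le> real j * a j"
    using sum_mono[of "{1..j}" a "\<lambda>_. a j"] le \<open>j \<le> n\<close> by simp
  have high: "real (n - j) * a j \<le> (\<Sum>i=Suc j..n. a i)"
    using sum_mono[of "{Suc j..n}" "\<lambda>_. a j" a] le \<open>j \<le> n\<close> False by simp
  have split: "(\<Sum>i=1..n. a i) = (\<Sum>i=1..j. a i) + (\<Sum>i=Suc j..n. a i)"
    using sum.atLeastLessThan_concat[of 1 "Suc j" "Suc n" a] \<open>j \<le> n\<close>
    by (simp add: atLeastLessThanSuc_atLeastAtMost)
  have "real n * (\<Sum>i=1..j. a i) = real j * (\<Sum>i=1..j. a i) + real (n - j) * (\<Sum>i=1..j. a i)"
    using \<open>j \<le> n\<close> by (simp add: of_nat_diff algebra_simps)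
  also have "\<dots> \<le> real j * (\<Sum>i=1..j. a i) + real j * (real (n - j) * a j)"
    using mult_left_mono[OF low, of "real (n - j)"] by (simp add: mult.left_commute)
  also have "\<dots> \<le> real j * (\<Sum>i=1..n. a i)"
    using high split by (simp add: mult_left_mono distrib_left)
  finally show ?thesis .
qed simp

lemma one_sided_deriv_unique:
  fixes f :: "real \<Rightarrow> real"
  assumes "at x within S \<noteq> bot"
    "(f has_real_derivative a) (at x within S)" "(f has_real_derivative b) (at x within S)"
  shows "a = b"
  using vector_derivative_unique_within[OF assms(1)] assms(2,3)
  by (simp add: has_real_derivative_iff_has_vector_derivative)

lemma at_left_closed_nonbot: "at (x::real) within {..x} \<noteq> bot"
proof -
  have "{..x} - {x} = {..<x}" by auto
  then show ?thesis by (subst at_within_eq_bot_iff) simp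
qed

lemma at_right_closed_nonbot: "at (x::real) within {x..} \<noteq> bot"
proof -
  have "{x..} - {x} = {x<..}" by auto
  then show ?thesis by (subst at_within_eq_bot_iff) simp
qed

section \<open>Polygonal systems through corners\<close>

text \<open>
  Assumption \<open>merge_level\<close> is the corner condition
  (G3).
\<close>
locale corner_system =
  fixes n :: nat and rl rh :: "nat \<Rightarrow> nat" and B :: "nat \<Rightarrow> nat \<Rightarrow> real"
  assumes block_bounds: "\<And>m. 1 \<le> rl m \<and> rl m \<le> rh m \<and> rh m \<le> n"
  and block_changes: "\<And>m. (rl m, rh m) \<noteq> (rl (Suc m), rh (Suc m))"
  and corner_nonneg: "\<And>m. 0 \<le> B m 1"
  and corner_sorted: "\<And>m i. 1 \<le> i \<Longrightarrow> i < n \<Longrightarrow> B m i \<le> B m (Suc i)"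
  and corner_step: "\<And>m. \<exists>d>0. \<forall>i\<in>{1..n}. B (Suc m) i = B m i + d * slope (rl m) (rh m) i"
  and sum_start: "(\<Sum>i=1..n. B 0 i) = 1"
  and sum_unbounded: "\<And>x. \<exists>m. x \<le> (\<Sum>i=1..n. B m i)"
  and block_level: "\<And>m j. j \<in> {rl m..rh m} \<Longrightarrow> B m j = B m (rl m)"
  and merge_level: "\<And>m j. rl m < rh (Suc m) \<Longrightarrow> j \<in> {rl m..rh (Suc m)} \<Longrightarrow>
                       B (Suc m) j = B (Suc m) (rl m)"
begin

definition tau :: "nat \<Rightarrow> real" where "tau m = (\<Sum>i=1..n. B m i)"
definition dir :: "nat \<Rightarrow> nat \<Rightarrow> real" where "dir m i = slope (rl m) (rh m) i"

definition segment :: "real \<Rightarrow> nat" where "segment q = (LEAST m. q < tau (Suc m))"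

definition P :: "nat \<Rightarrow> real \<Rightarrow> real" where
  "P j q = B (segment q) j + (q - tau (segment q)) * dir (segment q) j"

definition segment_line :: "nat \<Rightarrow> nat \<Rightarrow> real \<Rightarrow> real" where
  "segment_line m j y = B m j + (y - tau m) * dir m j"

text \<open>Blocks can only change if there are at least two coordinates.\<close>
lemma n_ge_2: "n \<ge> 2"
proof (rule ccontr)
  assume "\<not> n \<ge> 2"
  then have "rl m = 1 \<and> rh m = 1" for m using block_bounds[of m] by auto
  then show False using block_changes[of 0] by simp
qed

lemma sum_dir: "(\<Sum>i=1..n. dir m i) = 1"
  unfolding dir_def using block_bounds[of m] by (intro sum_slope) auto

lemma corner_Suc:
  "tau m < tau (Suc m) \<and> (\<forall>i\<in>{1..n}. B (Suc m) i = B m i + (tau (Suc m) - tau m) * dir m i)"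
proof -
  obtain d where d: "d > 0" "\<forall>i\<in>{1..n}. B (Suc m) i = B m i + d * dir m i"
    using corner_step[of m] unfolding dir_def by blast
  have "tau (Suc m) = (\<Sum>i=1..n. B m i + d * dir m i)"
    unfolding tau_def using d(2) by (intro sum.cong) auto
  also have "\<dots> = tau m + d"
    using sum_dir by (simp add: tau_def sum.distrib flip: sum_distrib_left)
  finally show ?thesis using d by auto
qed

lemma tau_less: "k < l \<Longrightarrow> tau k < tau l"
  using corner_Suc strict_monoI_Suc[of tau] by (simp add: strict_mono_less)

lemma tau_le: "k \<le> l \<Longrightarrow> tau k \<le> tau l"
  using tau_less by (cases "k = l") (auto intro: less_imp_le)

lemma tau_0: "tau 0 = 1" using sum_start by (simp add: tau_def)

lemma tau_ge_1: "tau m \<ge> 1" using tau_le[of 0 m] tau_0 by simp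

lemma segment_upper: "q < tau (Suc (segment q))"
proof -
  obtain m where "q + 1 \<le> tau m" using sum_unbounded[of "q + 1"] unfolding tau_def by blast
  then have "q < tau (Suc m)" using tau_less[of m "Suc m"] by simp
  then show ?thesis unfolding segment_def by (rule LeastI)
qed

lemma segment_lower: assumes "1 \<le> q" shows "tau (segment q) \<le> q"
proof (cases "segment q")
  case (Suc k)
  have "\<not> q < tau (Suc k)"
  proof
    assume "q < tau (Suc k)"
    then have "segment q \<le> k" unfolding segment_def by (rule Least_le)
    then show False using Suc by simp
  qed
  then show ?thesis using Suc by simp
qed (use assms tau_0 in simp)

lemma segment_ge: "tau M \<le> q \<Longrightarrow> M \<le> segment q"
  using tau_le[of "Suc (segment q)" M] segment_upper[of q] by linarith

lemma segment_eqI: "tau m \<le> q \<Longrightarrow> q < tau (Suc m) \<Longrightarrow> segment q = m"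
  using segment_ge[of m q] Least_le[of "\<lambda>m. q < tau (Suc m)" m] unfolding segment_def
  by simp

lemma P_on_segment:
  assumes "j \<in> {1..n}" "tau m \<le> y" "y \<le> tau (Suc m)"
  shows "P j y = segment_line m j y"
proof (cases "y < tau (Suc m)")
  case True
  then have "segment y = m" using assms segment_eqI by simp
  then show ?thesis unfolding P_def segment_line_def by simp
next
  case False
  then have y: "y = tau (Suc m)" using assms by simp
  then have "segment y = Suc m" using segment_eqI[of "Suc m" y] tau_less[of "Suc m" "Suc (Suc m)"] by simp
  then show ?thesis unfolding P_def segment_line_def using y corner_Suc[of m] assms(1) by simp
qed

lemma P_before_tau_1: assumes "j \<in> {1..n}" "y \<le> tau 1"
  shows "P j y = segment_line 0 j y"
proof (cases "y < tau 1")
  case True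
  then have "segment y = 0" unfolding segment_def by (intro Least_eq_0) simp
  then show ?thesis unfolding P_def segment_line_def by simp
qed (use P_on_segment[of j 0 y] assms tau_0 tau_ge_1[of 1] in simp)

lemma P_tau: "j \<in> {1..n} \<Longrightarrow> P j (tau m) = B m j"
  using P_on_segment[of j m "tau m"] tau_less[of m "Suc m"] by (simp add: segment_line_def)

lemma segment_line_deriv: "(segment_line m j has_real_derivative dir m j) (at y within S)"
  unfolding segment_line_def by (auto intro!: derivative_eq_intros)

lemma P_deriv_inside: assumes "j \<in> {1..n}" "tau m < y" "y < tau (Suc m)"
  shows "(P j has_real_derivative dir m j) (at y)"
  using segment_line_deriv
  by (rule has_field_derivative_transform_within_open[where S="{tau m<..<tau (Suc m)}"])
     (use assms in \<open>auto intro!: P_on_segment[symmetric]\<close>)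

lemma P_deriv_left: assumes "j \<in> {1..n}"
  shows "(P j has_real_derivative dir m j) (at (tau (Suc m)) within {..tau (Suc m)})"
  using segment_line_deriv
  by (rule has_field_derivative_transform_within[where d="tau (Suc m) - tau m"])
     (use assms corner_Suc[of m] in \<open>auto simp: dist_real_def intro!: P_on_segment[symmetric]\<close>)

lemma P_deriv_right: assumes "j \<in> {1..n}"
  shows "(P j has_real_derivative dir m j) (at (tau m) within {tau m..})"
  using segment_line_deriv
  by (rule has_field_derivative_transform_within[where d="tau (Suc m) - tau m"])
     (use assms corner_Suc[of m] in \<open>auto simp: dist_real_def intro!: P_on_segment[symmetric]\<close>)

lemma P_differentiable_inside:
  "tau m < y \<Longrightarrow> y < tau (Suc m) \<Longrightarrow> \<forall>j\<in>{1..n}. P j differentiable (at y)"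
  using P_deriv_inside real_differentiable_def by blast

text \<open>Since the block changes, the one-sided derivatives differ at every inner corner.\<close>
lemma not_differentiable_at_corner: "\<not> (\<forall>j\<in>{1..n}. P j differentiable (at (tau (Suc m))))"
proof
  assume diff: "\<forall>j\<in>{1..n}. P j differentiable (at (tau (Suc m)))"
  have "slope (rl m) (rh m) i = slope (rl (Suc m)) (rh (Suc m)) i" if i: "i \<in> {1..n}" for i
  proof -
    obtain D where D: "(P i has_real_derivative D) (at (tau (Suc m)))"
      using diff i real_differentiable_def by blast
    have "dir m i = D"
      using one_sided_deriv_unique[OF at_left_closed_nonbot P_deriv_left[OF i]]
        has_field_derivative_at_within[OF D] by blast
    moreover have "dir (Suc m) i = D"
      using one_sided_deriv_unique[OF at_right_closed_nonbot P_deriv_right[OF i]]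
        has_field_derivative_at_within[OF D] by blast
    ultimately show ?thesis by (simp add: dir_def)
  qed
  then have "rl m = rl (Suc m) \<and> rh m = rh (Suc m)"
    using block_bounds[of m] block_bounds[of "Suc m"] by (intro slope_determines_block[of _ _ n]) auto
  then show False using block_changes[of m] by simp
qed

lemma between_corners: assumes "1 \<le> q" "q \<notin> range tau"
  shows "tau (segment q) < q \<and> q < tau (Suc (segment q))"
  using segment_lower[OF assms(1)] segment_upper[of q] assms(2) by (metis order_le_less rangeI)

lemma nondiff_pts_corners: "nondiff_pts n {1..} P = range tau"
proof
  show "nondiff_pts n {1..} P \<subseteq> range tau"
  proof
    fix q assume q: "q \<in> nondiff_pts n {1..} P"
    show "q \<in> range tau"
    proof (rule ccontr)
      assume nq: "q \<notin> range tau"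
      have "1 \<le> q" using q by (simp add: nondiff_pts_def)
      then have "1 < q" using nq tau_0 by (auto simp: order_le_less)
      moreover have "\<forall>j\<in>{1..n}. P j differentiable (at q)"
        using between_corners[OF \<open>1 \<le> q\<close> nq] P_differentiable_inside by blast
      ultimately show False using q by (simp add: nondiff_pts_def)
    qed
  qed
next
  show "range tau \<subseteq> nondiff_pts n {1..} P"
  proof
    fix q assume "q \<in> range tau"
    then obtain m where m: "q = tau m" by blast
    show "q \<in> nondiff_pts n {1..} P"
      using not_differentiable_at_corner tau_ge_1 tau_0 unfolding m nondiff_pts_def
      by (cases m) auto
  qed
qed

lemma corners_isolated: assumes "1 \<le> q" shows "\<exists>e>0. \<forall>k. tau k \<noteq> q \<longrightarrow> e \<le> \<bar>tau k - q\<bar>"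
proof -
  define m where "m = segment q"
  have lo: "tau m \<le> q" and hi: "q < tau (Suc m)"
    using segment_lower[OF assms] segment_upper m_def by auto
  define e where "e = min (tau (Suc m) - q)
    (if tau m = q then (if m = 0 then 1 else tau m - tau (m - 1)) else q - tau m)"
  have "e > 0" using hi lo tau_less[of "m - 1" m] by (auto simp: e_def)
  moreover have "e \<le> \<bar>tau k - q\<bar>" if "tau k \<noteq> q" for k
  proof (cases "m < k")
    case True
    then have "tau (Suc m) \<le> tau k" by (intro tau_le) simp
    then show ?thesis using hi by (auto simp: e_def)
  next
    case False
    then consider "k = m" | "k < m" by linarith
    then show ?thesis
    proof cases
      case 2
      then have "tau k \<le> tau (m - 1)" "tau k < tau m" using tau_le tau_less by auto
      then show ?thesis using lo 2 by (auto simp: e_def)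
    qed (use that lo in \<open>auto simp: e_def\<close>)
  qed
  ultimately show ?thesis by blast
qed

lemma segment_line_continuous: "continuous_on S (segment_line m j)"
  unfolding segment_line_def by (intro continuous_intros)

lemma P_continuous_on_segment: "j \<in> {1..n} \<Longrightarrow> continuous_on {tau m..tau (Suc m)} (P j)"
  using segment_line_continuous
  by (rule continuous_on_cong[THEN iffD1, rotated 2]) (auto intro!: P_on_segment[symmetric])

lemma P_isCont: assumes j: "j \<in> {1..n}" and x: "1 \<le> x" shows "isCont (P j) x"
proof -
  define m where "m = segment x"
  have lo: "tau m \<le> x" and hi: "x < tau (Suc m)"
    using segment_lower[OF x] segment_upper m_def by auto
  have "\<exists>a c. a < x \<and> x < c \<and> continuous_on {a..c} (P j)"
  proof (cases "tau m < x")
    case True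
    then show ?thesis using hi P_continuous_on_segment[OF j] by blast
  next
    case False
    then have xe: "x = tau m" using lo by simp
    show ?thesis
    proof (cases m)
      case 0
      have "continuous_on {x - 1..tau 1} (P j)"
        using segment_line_continuous
        by (rule continuous_on_cong[THEN iffD1, rotated 2]) (use j in \<open>auto intro!: P_before_tau_1[symmetric]\<close>)
      then show ?thesis using hi 0 by (intro exI[of _ "x - 1"] exI[of _ "tau 1"]) auto
    next
      case (Suc k)
      have "{tau k..tau (Suc k)} \<union> {tau (Suc k)..tau (Suc (Suc k))} = {tau k..tau (Suc (Suc k))}"
        using tau_less[of k "Suc k"] tau_less[of "Suc k" "Suc (Suc k)"] by auto
      moreover have "continuous_on ({tau k..tau (Suc k)} \<union> {tau (Suc k)..tau (Suc (Suc k))}) (P j)"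
        by (intro continuous_on_closed_Un P_continuous_on_segment j) auto
      ultimately show ?thesis using xe Suc hi tau_less[of k "Suc k"]
        by (intro exI[of _ "tau k"] exI[of _ "tau (Suc (Suc k))"]) auto
    qed
  qed
  then show ?thesis using continuous_on_interior[of "{_.._}" "P j" x] by fastforce
qed

lemma P_convex_combination:
  assumes "tau m \<le> q" "q \<le> tau (Suc m)"
  obtains lam where "0 \<le> lam" "lam \<le> 1"
    "\<And>j. j \<in> {1..n} \<Longrightarrow> P j q = (1 - lam) * B m j + lam * B (Suc m) j"
proof
  define d where "d = tau (Suc m) - tau m"
  define lam where "lam = (q - tau m) / d"
  have d: "d > 0" using corner_Suc[of m] d_def by simp
  show "0 \<le> lam" "lam \<le> 1" using assms d by (auto simp: lam_def d_def)
  fix j assume j: "j \<in> {1..n}"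
  have "P j q = B m j + lam * (d * dir m j)"
    using P_on_segment[OF j assms] d by (simp add: segment_line_def lam_def)
  also have "d * dir m j = B (Suc m) j - B m j" using corner_Suc[of m] j by (simp add: d_def)
  finally show "P j q = (1 - lam) * B m j + lam * B (Suc m) j" by (simp add: algebra_simps)
qed

lemma P_sorted_sum: assumes q: "1 \<le> q"
  shows "0 \<le> P 1 q \<and> (\<forall>j. 1 \<le> j \<and> j < n \<longrightarrow> P j q \<le> P (Suc j) q) \<and> (\<Sum>j=1..n. P j q) = q"
proof -
  define m where "m = segment q"
  have lo: "tau m \<le> q" and hi: "q < tau (Suc m)"
    using segment_lower[OF q] segment_upper m_def by auto
  obtain lam where lam: "0 \<le> lam" "lam \<le> 1"
    and conv: "\<And>j. j \<in> {1..n} \<Longrightarrow> P j q = (1 - lam) * B m j + lam * B (Suc m) j"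
    using P_convex_combination[OF lo less_imp_le[OF hi]] by blast
  have "0 \<le> P 1 q"
    using conv[of 1] n_ge_2 lam corner_nonneg[of m] corner_nonneg[of "Suc m"] by simp
  moreover have "P j q \<le> P (Suc j) q" if "1 \<le> j" "j < n" for j
  proof -
    have "(1 - lam) * B m j + lam * B (Suc m) j \<le> (1 - lam) * B m (Suc j) + lam * B (Suc m) (Suc j)"
      using lam corner_sorted[OF that] by (intro add_mono mult_left_mono) auto
    then show ?thesis using conv[of j] conv[of "Suc j"] that by simp
  qed
  moreover have "(\<Sum>j=1..n. P j q) = q"
  proof -
    have "(\<Sum>j=1..n. P j q) = (\<Sum>j=1..n. B m j + (q - tau m) * dir m j)"
      using P_on_segment[OF _ lo] hi by (intro sum.cong) (auto simp: segment_line_def)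
    also have "\<dots> = q"
      using sum_dir by (simp add: sum.distrib tau_def flip: sum_distrib_left)
    finally show ?thesis .
  qed
  ultimately show ?thesis by blast
qed

lemma no_corner_inside: "\<not> (tau m < tau k \<and> tau k < tau (Suc m))"
  using tau_le[of k m] tau_le[of "Suc m" k] by (cases "k \<le> m") auto

lemma P_cont_pw_linear: "cont_pw_linear n {1..} P"
  unfolding cont_pw_linear_def nondiff_pts_corners
proof (intro conjI ballI)
  show "continuous_on {1..} (P j)" if "j \<in> {1..n}" for j
    by (intro continuous_at_imp_continuous_on ballI P_isCont that) simp
  show "\<exists>e>0. \<forall>x\<in>range tau. x \<noteq> q \<longrightarrow> e \<le> \<bar>x - q\<bar>" if "q \<in> {1..}" for q
    using corners_isolated[of q] that by auto
next
  fix q assume q: "q \<in> {1..} - range tau"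
  define m where "m = segment q"
  have lh: "tau m < q" "q < tau (Suc m)" using between_corners q m_def by auto
  show "\<exists>e>0. \<forall>x. \<bar>x - q\<bar> < e \<longrightarrow> x \<in> {1..} - range tau \<and>
         (\<forall>j\<in>{1..n}. deriv (P j) x = deriv (P j) q)"
  proof (intro exI[of _ "min (q - tau m) (tau (Suc m) - q)"] conjI allI impI ballI)
    fix x assume "\<bar>x - q\<bar> < min (q - tau m) (tau (Suc m) - q)"
    then have xl: "tau m < x" "x < tau (Suc m)" by (auto simp: abs_less_iff)
    show "x \<in> {1..} - range tau"
      using xl tau_ge_1[of m] no_corner_inside by auto
    show "deriv (P j) x = deriv (P j) q" if j: "j \<in> {1..n}" for j
      using DERIV_imp_deriv[OF P_deriv_inside[OF j xl]] DERIV_imp_deriv[OF P_deriv_inside[OF j lh]]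
      by simp
  qed (use lh in simp)
qed

lemma interval_inside_segment:
  assumes H: "x \<in> H" "open H" "is_interval H" "H \<subseteq> {1..}"
    and dH: "\<forall>x\<in>H. \<forall>j\<in>{1..n}. P j differentiable (at x)"
  shows "\<exists>m. H \<subseteq> {tau m<..<tau (Suc m)}"
proof -
  have "H \<subseteq> {1<..}" using interior_maximal[OF H(4) H(2)] by simp
  then have notau: "tau k \<notin> H" for k
    using tau_0 dH not_differentiable_at_corner by (cases k) (auto, blast)
  define m where "m = segment x"
  have lh: "tau m < x" "x < tau (Suc m)"
    using between_corners[of x] H notau m_def by auto
  have "tau m < y \<and> y < tau (Suc m)" if y: "y \<in> H" for y
  proof (rule ccontr)
    assume "\<not> (tau m < y \<and> y < tau (Suc m))"
    then have "tau m \<in> H \<or> tau (Suc m) \<in> H"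
      using H(1,3) y lh unfolding is_interval_1 by (meson less_le_not_le linorder_le_less_linear)
    then show False using notau by blast
  qed
  then show ?thesis by (intro exI[of _ m]) auto
qed

lemma P_block_motion:
  assumes H: "H \<noteq> {}" "open H" "is_interval H" "H \<subseteq> {1..}"
    and dH: "\<forall>x\<in>H. \<forall>j\<in>{1..n}. P j differentiable (at x)"
  shows "\<exists>rl rh. 1 \<le> rl \<and> rl \<le> rh \<and> rh \<le> n \<and>
           (\<forall>j\<in>{rl..rh}. \<forall>x\<in>H. P j x = P rl x \<and>
               (P j has_real_derivative 1 / real (rh - rl + 1)) (at x)) \<and>
           (\<forall>j\<in>{1..n} - {rl..rh}. \<forall>x\<in>H. \<forall>y\<in>H. P j x = P j y)"
proof -
  obtain m where inH: "H \<subseteq> {tau m<..<tau (Suc m)}"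
    using interval_inside_segment[OF _ H(2-4) dH] H(1) by blast
  have Pv: "P j y = B m j + (y - tau m) * dir m j" if "j \<in> {1..n}" "y \<in> H" for j y
    using P_on_segment[OF that(1)] inH that(2) by (force simp: segment_line_def)
  have blk: "1 \<le> rl m" "rl m \<le> rh m" "rh m \<le> n" using block_bounds[of m] by auto
  have "P j y = P (rl m) y \<and> (P j has_real_derivative 1 / real (rh m - rl m + 1)) (at y)"
    if j: "j \<in> {rl m..rh m}" and y: "y \<in> H" for j y
  proof -
    have j1: "j \<in> {1..n}" "rl m \<in> {1..n}" using j blk by auto
    have "dir m j = 1 / real (rh m - rl m + 1)" "dir m (rl m) = 1 / real (rh m - rl m + 1)"
      using j blk by (simp_all add: dir_def slope_def)
    moreover have "(P j has_real_derivative dir m j) (at y)"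
      using P_deriv_inside[OF j1(1)] inH y by auto
    ultimately show ?thesis
      using Pv[OF j1(1) y] Pv[OF j1(2) y] block_level[OF j] by simp
  qed
  moreover have "P j y = P j z" if "j \<in> {1..n} - {rl m..rh m}" "y \<in> H" "z \<in> H" for j y z
    using Pv[of j y] Pv[of j z] that by (auto simp: dir_def slope_def)
  ultimately show ?thesis using blk by blast
qed

lemma left_block_at_corner:
  assumes "1 \<le> l" "l \<le> h" "h \<le> n"
    and D: "\<forall>j\<in>{1..n}. (P j has_real_derivative slope l h j) (at (tau (Suc m)) within {..tau (Suc m)})"
  shows "l = rl m \<and> h = rh m"
proof -
  have "slope l h j = slope (rl m) (rh m) j" if "j \<in> {1..n}" for j
    using one_sided_deriv_unique[OF at_left_closed_nonbot D[rule_format, OF that] P_deriv_left[OF that]]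
    by (simp add: dir_def)
  then show ?thesis
    using assms(1-3) block_bounds[of m] slope_determines_block[of l h n "rl m" "rh m"] by auto
qed

lemma right_block_at_corner:
  assumes "1 \<le> l" "l \<le> h" "h \<le> n"
    and D: "\<forall>j\<in>{1..n}. (P j has_real_derivative slope l h j) (at (tau m) within {tau m..})"
  shows "l = rl m \<and> h = rh m"
proof -
  have "slope l h j = slope (rl m) (rh m) j" if "j \<in> {1..n}" for j
    using one_sided_deriv_unique[OF at_right_closed_nonbot D[rule_format, OF that] P_deriv_right[OF that]]
    by (simp add: dir_def)
  then show ?thesis
    using assms(1-3) block_bounds[of m] slope_determines_block[of l h n "rl m" "rh m"] by auto
qed

text \<open>Condition (G3), which is the assumption \<open>merge_level\<close> read at the corners.\<close>
lemma P_corner_condition: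
  assumes q: "1 < q" and nd: "\<not> (\<forall>j\<in>{1..n}. P j differentiable (at q))"
    and blocks: "1 \<le> l" "l \<le> h" "h \<le> n" "1 \<le> l'" "l' \<le> h'" "h' \<le> n"
    and left: "\<forall>j\<in>{1..n}. (P j has_real_derivative slope l h j) (at q within {..q})"
    and right: "\<forall>j\<in>{1..n}. (P j has_real_derivative slope l' h' j) (at q within {q..})"
    and "l < h'"
  shows "\<forall>j\<in>{l..h'}. P j q = P l q"
proof -
  have "q \<in> nondiff_pts n {1..} P" using q nd by (simp add: nondiff_pts_def)
  then obtain i where i: "q = tau i" by (auto simp only: nondiff_pts_corners)
  with q tau_0 obtain k where k: "q = tau (Suc k)" by (cases i) auto
  have "l = rl k" using left_block_at_corner[OF blocks(1-3) left[unfolded k]] by simp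
  moreover have "h' = rh (Suc k)" using right_block_at_corner[OF blocks(4-6) right[unfolded k]] by simp
  ultimately have merge: "B (Suc k) j = B (Suc k) l" if "j \<in> {l..h'}" for j
    using merge_level[of k j] \<open>l < h'\<close> that by simp
  show ?thesis
  proof
    fix j assume j: "j \<in> {l..h'}"
    then have "j \<in> {1..n}" "l \<in> {1..n}" using blocks by auto
    then show "P j q = P l q" using merge[OF j] by (simp add: k P_tau)
  qed
qed

theorem gen_n_system: "gen_n_system n {1..} P"
proof -
  have G2: "\<forall>H. H \<noteq> {} \<and> open H \<and> is_interval H \<and> H \<subseteq> {1..} \<and>
          (\<forall>x\<in>H. \<forall>j\<in>{1..n}. P j differentiable (at x)) \<longrightarrow>
        (\<exists>rl rh. 1 \<le> rl \<and> rl \<le> rh \<and> rh \<le> n \<and>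
           (\<forall>j\<in>{rl..rh}. \<forall>x\<in>H. P j x = P rl x \<and>
               (P j has_real_derivative 1 / real (rh - rl + 1)) (at x)) \<and>
           (\<forall>j\<in>{1..n} - {rl..rh}. \<forall>x\<in>H. \<forall>y\<in>H. P j x = P j y))"
    by (intro allI impI, elim conjE) (rule P_block_motion)
  have G3: "\<forall>q\<in>interior {1..}. \<not> (\<forall>j\<in>{1..n}. P j differentiable (at q)) \<longrightarrow>
        (\<forall>l h l' h'. 1 \<le> l \<and> l \<le> h \<and> h \<le> n \<and> 1 \<le> l' \<and> l' \<le> h' \<and> h' \<le> n \<and>
           (\<forall>j\<in>{1..n}. (P j has_real_derivative slope l h j) (at q within {..q})) \<and>
           (\<forall>j\<in>{1..n}. (P j has_real_derivative slope l' h' j) (at q within {q..})) \<and>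
           l < h' \<longrightarrow> (\<forall>j\<in>{l..h'}. P j q = P l q))"
    by (intro ballI allI impI, elim conjE) (rule P_corner_condition[THEN bspec]; auto)
  show ?thesis
    unfolding gen_n_system_def slope_def[symmetric]
    using P_cont_pw_linear P_sorted_sum G2 G3 by blast
qed

end

section \<open>The normalised sums along a polygonal system\<close>

text \<open>Along a segment, \<open>psi j (P q / q)\<close> has the form \<open>(N + t * sg) / (T + t)\<close>, which is
  monotone in \<open>t\<close>; the direction of monotonicity is decided by comparing \<open>sg\<close> with \<open>N / T\<close>.\<close>
lemma ratio_decreasing:
  fixes N T t sg :: real
  assumes "T > 0" "t \<ge> 0" "sg * T \<le> N"
  shows "(N + t * sg) / (T + t) \<le> N / T"
proof -
  have "(N + t * sg) * T \<le> N * (T + t)"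
    using assms mult_left_mono[OF assms(3), of t] by (simp add: algebra_simps)
  then show ?thesis using assms by (simp add: divide_simps)
qed

lemma ratio_increasing:
  fixes N T t sg :: real
  assumes "T > 0" "t \<ge> 0" "sg * T \<ge> N"
  shows "(N + t * sg) / (T + t) \<ge> N / T"
proof -
  have "(N + t * sg) * T \<ge> N * (T + t)"
    using assms mult_left_mono[OF assms(3), of t] by (simp add: algebra_simps)
  then show ?thesis using assms by (simp add: divide_simps)
qed

lemma ratio_ge_min_ends:
  fixes N T d sg t :: real
  assumes "T > 0" "0 \<le> t" "t \<le> d"
  shows "(N + t * sg) / (T + t) \<ge> min (N / T) ((N + d * sg) / (T + d))"
proof (cases "sg * T \<ge> N")
  case True
  then show ?thesis using ratio_increasing[OF assms(1,2) True] by simp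
next
  case False
  have "(d - t) * (sg * T) \<le> (d - t) * N" using False assms by (intro mult_left_mono) auto
  then have "(N + t * sg) * (T + d) \<ge> (N + d * sg) * (T + t)"
    by (simp add: algebra_simps)
  then have "(N + t * sg) / (T + t) \<ge> (N + d * sg) / (T + d)" using assms by (simp add: divide_simps)
  then show ?thesis by simp
qed

context corner_system begin

definition corner_psi :: "nat \<Rightarrow> nat \<Rightarrow> real" where
  "corner_psi j m = (\<Sum>i=1..j. B m i) / tau m"

lemma psi_P_eq: "psi j (\<lambda>i. P i q / q) = (\<Sum>i=1..j. P i q) / q"
  unfolding psi_def by (simp add: sum_divide_distrib)

lemma psi_P_tau: "j \<le> n \<Longrightarrow> psi j (\<lambda>i. P i (tau m) / tau m) = corner_psi j m"
  unfolding psi_P_eq corner_psi_def using P_tau by simp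

lemma psi_P_le: assumes "j \<le> n" "1 \<le> q" shows "psi j (\<lambda>i. P i q / q) \<le> real j / real n"
proof -
  have sorted: "\<And>i. 1 \<le> i \<Longrightarrow> i < n \<Longrightarrow> P i q \<le> P (Suc i) q" and sum: "(\<Sum>i=1..n. P i q) = q"
    using P_sorted_sum[OF assms(2)] by auto
  have "real n * (\<Sum>i=1..j. P i q) \<le> real j * q"
    using sorted_initial_sum_le[where a="\<lambda>i. P i q", OF sorted assms(1)] sum by simp
  then show ?thesis unfolding psi_P_eq using assms n_ge_2 by (simp add: divide_simps mult.commute)
qed

lemma corner_psi_le: "j \<le> n \<Longrightarrow> corner_psi j m \<le> real j / real n"
  using psi_P_le[of j "tau m"] tau_ge_1[of m] psi_P_tau by simp

lemma corner_psi_Suc: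
  assumes j: "j \<le> n"
  shows "corner_psi j (Suc m) = ((\<Sum>i=1..j. B m i) + (tau (Suc m) - tau m) * (\<Sum>i=1..j. dir m i))
                                 / (tau m + (tau (Suc m) - tau m))"
proof -
  have "(\<Sum>i=1..j. B (Suc m) i) = (\<Sum>i=1..j. B m i + (tau (Suc m) - tau m) * dir m i)"
    using corner_Suc[of m] j by (intro sum.cong) auto
  then show ?thesis unfolding corner_psi_def by (simp add: sum.distrib sum_distrib_left)
qed

lemma corner_psi_decreases:
  assumes j: "j \<le> n" and c: "(\<Sum>i=1..j. dir m i) * tau m \<le> (\<Sum>i=1..j. B m i)"
  shows "corner_psi j (Suc m) \<le> corner_psi j m"
  unfolding corner_psi_Suc[OF j]
  using ratio_decreasing[OF _ _ c, where t="tau (Suc m) - tau m"] tau_ge_1[of m] corner_Suc[of m]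
  by (simp add: corner_psi_def)

lemma corner_psi_increases:
  assumes j: "j \<le> n" and c: "(\<Sum>i=1..j. dir m i) * tau m \<ge> (\<Sum>i=1..j. B m i)"
  shows "corner_psi j (Suc m) \<ge> corner_psi j m"
  unfolding corner_psi_Suc[OF j]
  using ratio_increasing[OF _ _ c, where t="tau (Suc m) - tau m"] tau_ge_1[of m] corner_Suc[of m]
  by (simp add: corner_psi_def)

lemma psi_P_ge_segment_ends:
  assumes j: "j \<le> n" and q: "1 \<le> q"
  defines "m \<equiv> segment q"
  shows "psi j (\<lambda>i. P i q / q) \<ge> min (corner_psi j m) (corner_psi j (Suc m))"
proof -
  have q': "tau m \<le> q" "q \<le> tau (Suc m)"
    using segment_lower[OF q] segment_upper[of q] unfolding m_def by auto
  have "(\<Sum>i=1..j. P i q) = (\<Sum>i=1..j. B m i + (q - tau m) * dir m i)"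
    using P_on_segment[OF _ q'] j by (intro sum.cong) (auto simp: segment_line_def)
  then have "psi j (\<lambda>i. P i q / q)
      = ((\<Sum>i=1..j. B m i) + (q - tau m) * (\<Sum>i=1..j. dir m i)) / (tau m + (q - tau m))"
    unfolding psi_P_eq by (simp add: sum.distrib sum_distrib_left)
  then show ?thesis unfolding corner_psi_Suc[OF j]
    using ratio_ge_min_ends[of "tau m" "q - tau m" "tau (Suc m) - tau m" "\<Sum>i=1..j. B m i"]
      tau_ge_1[of m] q' by (simp add: corner_psi_def)
qed

end

section \<open>The construction\<close>

lemma block_raise_is_move:
  assumes "l \<le> h" "c < c'"
    and new: "\<And>i. i \<in> {1..n} \<Longrightarrow> V' i = (if i \<in> {l..h} then c' else V i)"
    and old: "\<And>i. i \<in> {l..h} \<Longrightarrow> V i = c"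
  shows "\<exists>d>0. \<forall>i\<in>{1..n}. V' i = V i + d * slope l h i"
proof (intro exI[of _ "real (h - l + 1) * (c' - c)"] conjI ballI)
  show "real (h - l + 1) * (c' - c) > 0" using assms(2) by simp
  show "V' i = V i + real (h - l + 1) * (c' - c) * slope l h i" if "i \<in> {1..n}" for i
    using new[OF that] old by (simp add: slope_def)
qed

lemma closedDelta_nonneg: assumes "e \<in> closedDelta n" shows "0 \<le> e i"
proof (cases "i \<in> {1..n}")
  case True
  have sorted: "\<And>i. 1 \<le> i \<Longrightarrow> i < n \<Longrightarrow> e i \<le> e (Suc i)" and "0 \<le> e 1"
    using assms by (auto simp: closedDelta_def)
  then show ?thesis using sorted_range_mono[where a=e and n=n and i=1 and k=i, OF sorted] True by auto
qed (use assms in \<open>simp add: closedDelta_def\<close>)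

lemma psi_nonneg_closedDelta: "e \<in> closedDelta n \<Longrightarrow> 0 \<le> psi j e"
  unfolding psi_def by (intro sum_nonneg) (rule closedDelta_nonneg)

lemma Suc_div_mod_cases:
  fixes N :: nat
  assumes "N > 0"
  obtains (inside) "Suc (m mod N) < N" "Suc m div N = m div N" "Suc m mod N = Suc (m mod N)"
  | (wrap) "m mod N = N - 1" "Suc m div N = Suc (m div N)" "Suc m mod N = 0"
proof (cases "Suc (m mod N) < N")
  case True
  then show ?thesis using inside by (simp add: mod_Suc div_Suc)
next
  case False
  then have "m mod N = N - 1"
    using assms by (metis Suc_lessI diff_Suc_1 mod_less_divisor)
  then show ?thesis using wrap False assms by (simp add: mod_Suc div_Suc)
qed

text \<open>
  Epoch \<open>k\<close> consists of
  \<open>epoch_len = 2n - 1\<close> moves between the levels \<open>level k 0 < \<dots> < level k n\<close>: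
  corner \<open>p < n\<close> of the epoch is \<open>level k (min i p)\<close> and the moves raise the upper
  block \<open>{p + 1..n}\<close>; corner \<open>p \<ge> n\<close> is \<open>level k (max i (p - n + 1))\<close> and the moves
  raise the lower block \<open>{1..p - n + 1}\<close>.  Thus the epoch starts at the equal vector
  \<open>scale k\<close>, passes through the corner \<open>level k\<close> (at \<open>p = n\<close>) and ends at the equal
  vector \<open>level k n = scale (k + 1)\<close>.
\<close>
locale epoch_construction =
  fixes n :: nat and a :: "nat \<Rightarrow> nat \<Rightarrow> real"
  assumes n_ge_2: "n \<ge> 2" and a_in_Delta: "\<And>k. a k \<in> closedDelta n"
begin

lemma a_outside: "i \<notin> {1..n} \<Longrightarrow> a k i = 0"
  using a_in_Delta[of k] by (simp add: closedDelta_def)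

lemma a_sum: "(\<Sum>i=1..n. a k i) = 1"
  using a_in_Delta[of k] by (simp add: closedDelta_def)

text \<open>With \<open>a k 0 = 0\<close>, the coordinates of \<open>a k\<close> are sorted on \<open>{0..n}\<close>.\<close>
lemma a_mono: assumes "i \<le> i'" "i' \<le> n" shows "a k i \<le> a k i'"
proof (cases "i = 0")
  case True
  then show ?thesis using a_outside[of 0 k] closedDelta_nonneg[OF a_in_Delta] by simp
next
  case False
  have sorted: "\<And>i. 1 \<le> i \<Longrightarrow> i < n \<Longrightarrow> a k i \<le> a k (Suc i)"
    using a_in_Delta[of k] by (auto simp: closedDelta_def)
  show ?thesis
    using sorted_range_mono[where a="a k" and n=n and i=i and k=i', OF sorted] False assms by simp
qed

lemma psi_a_nonneg: "0 \<le> psi j (a k)"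
  by (rule psi_nonneg_closedDelta[OF a_in_Delta])

lemma psi_a_le_1: assumes "j \<le> n" shows "psi j (a k) \<le> 1"
  using sum_mono2[of "{1..n}" "{1..j}" "a k"] assms closedDelta_nonneg[OF a_in_Delta] a_sum[of k]
  by (simp add: psi_def)

text \<open>The common value of the coordinates at the start of epoch \<open>k\<close>.\<close>
fun scale :: "nat \<Rightarrow> real" where
  "scale 0 = 1 / real n"
| "scale (Suc k) = scale k * (1 + real n + (real k + 1) * a k n)"

lemma scale_bounds: "scale k \<ge> 1 / real n \<and> scale k \<ge> real k"
proof (induction k)
  case (Suc k)
  have n: "real n > 0" using n_ge_2 by simp
  have "scale k * (1 + real n) \<le> scale (Suc k)"
    using Suc n closedDelta_nonneg[OF a_in_Delta, of k n] by (simp, intro mult_left_mono) (auto intro: order_trans[rotated])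
  moreover have "scale k * real n \<ge> 1" using Suc n by (simp add: divide_simps mult.commute)
  ultimately show ?case using Suc n by (simp add: algebra_simps)
qed simp

lemma scale_pos: "scale k > 0"
proof -
  have "1 / real n > 0" using n_ge_2 by simp
  then show ?thesis using scale_bounds[of k] by linarith
qed

text \<open>The heights visited in epoch \<open>k\<close>; \<open>level k i / (scale k * (k + 1))\<close> differs from
  \<open>a k i\<close> by \<open>(1 + i) / (k + 1)\<close>.\<close>
definition level :: "nat \<Rightarrow> nat \<Rightarrow> real" where
  "level k i = scale k * (1 + real i + (real k + 1) * a k i)"

lemma level_0: "level k 0 = scale k" by (simp add: level_def a_outside)
lemma level_n: "level k n = scale (Suc k)" by (simp add: level_def)

lemma level_less: assumes "i < i'" "i' \<le> n" shows "level k i < level k i'"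
proof -
  have "(real k + 1) * a k i \<le> (real k + 1) * a k i'"
    using a_mono[of i i' k] assms by (intro mult_left_mono) auto
  then have "1 + real i + (real k + 1) * a k i < 1 + real i' + (real k + 1) * a k i'"
    using assms(1) by linarith
  then show ?thesis unfolding level_def using scale_pos[of k] by simp
qed

lemma level_le: "i \<le> i' \<Longrightarrow> i' \<le> n \<Longrightarrow> level k i \<le> level k i'"
  using level_less[of i i' k] by (cases "i = i'") auto

lemma level_pos: "i \<le> n \<Longrightarrow> level k i > 0"
  using level_le[of 0 i k] level_0 scale_pos[of k] by simp

definition epoch_len :: nat where "epoch_len = 2 * n - 1"

lemma epoch_len_gt_n: "n < epoch_len" using n_ge_2 by (simp add: epoch_len_def)

lemma epoch_len_pos: "epoch_len > 0" using epoch_len_gt_n by simp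

definition epoch_corner :: "nat \<Rightarrow> nat \<Rightarrow> nat \<Rightarrow> real" where
  "epoch_corner k p i = level k (if p < n then min i p else max i (p - n + 1))"
definition epoch_rl :: "nat \<Rightarrow> nat" where "epoch_rl p = (if p < n then p + 1 else 1)"
definition epoch_rh :: "nat \<Rightarrow> nat" where "epoch_rh p = (if p < n then n else p - n + 1)"
definition block_height :: "nat \<Rightarrow> nat" where "block_height p = (if p < n then p else p - n + 1)"

lemma epoch_block_bounds: "p < epoch_len \<Longrightarrow> 1 \<le> epoch_rl p \<and> epoch_rl p \<le> epoch_rh p \<and> epoch_rh p \<le> n"
  by (auto simp: epoch_rl_def epoch_rh_def epoch_len_def)

lemma block_height_less: "p < epoch_len \<Longrightarrow> block_height p < n"
  by (auto simp: block_height_def epoch_len_def)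

lemma epoch_corner_block:
  "p < epoch_len \<Longrightarrow> j \<in> {epoch_rl p..epoch_rh p} \<Longrightarrow> epoch_corner k p j = level k (block_height p)"
  by (auto simp: epoch_corner_def epoch_rl_def epoch_rh_def block_height_def)

lemma epoch_corner_Suc:
  assumes "Suc p < epoch_len" "i \<in> {1..n}"
  shows "epoch_corner k (Suc p) i =
    (if i \<in> {epoch_rl p..epoch_rh p} then level k (Suc (block_height p)) else epoch_corner k p i)"
proof -
  consider "Suc p < n" | "Suc p = n" | "n \<le> p" by linarith
  then show ?thesis
  proof cases
    case 1
    then show ?thesis using assms(2)
      by (auto simp: epoch_corner_def epoch_rl_def epoch_rh_def block_height_def min_def le_Suc_eq)
  next
    case 2
    then show ?thesis using assms(2)
      by (auto simp: epoch_corner_def epoch_rl_def epoch_rh_def block_height_def min_def max_def)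
  next
    case 3
    then have "Suc p - n + 1 = Suc (p - n + 1)" by simp
    then show ?thesis using 3 assms(2)
      by (auto simp: epoch_corner_def epoch_rl_def epoch_rh_def block_height_def max_def le_Suc_eq)
  qed
qed

text \<open>The last move of an epoch ends at the equal vector that starts the next one.\<close>
lemma epoch_corner_wrap:
  assumes "i \<in> {1..n}"
  defines "p \<equiv> epoch_len - 1"
  shows "epoch_corner (Suc k) 0 i =
    (if i \<in> {epoch_rl p..epoch_rh p} then level k (Suc (block_height p)) else epoch_corner k p i)"
proof -
  have p: "\<not> p < n" "p - n + 1 = n - 1" using n_ge_2 by (auto simp: p_def epoch_len_def)
  have "epoch_corner (Suc k) 0 i = level k n"
    using level_0[of "Suc k"] level_n[of k] n_ge_2 by (simp add: epoch_corner_def)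
  moreover have "i = n" if "\<not> i \<le> n - 1" using that assms(1) by simp
  ultimately show ?thesis using assms(1) p n_ge_2
    by (auto simp: epoch_corner_def epoch_rl_def epoch_rh_def block_height_def max_def)
qed

definition corner :: "nat \<Rightarrow> nat \<Rightarrow> real" where
  "corner m i = epoch_corner (m div epoch_len) (m mod epoch_len) i"
definition corner_rl :: "nat \<Rightarrow> nat" where "corner_rl m = epoch_rl (m mod epoch_len)"
definition corner_rh :: "nat \<Rightarrow> nat" where "corner_rh m = epoch_rh (m mod epoch_len)"

lemma corner_epoch: "p < epoch_len \<Longrightarrow> corner (k * epoch_len + p) i = epoch_corner k p i"
  by (simp add: corner_def)

lemma corner_epoch_start: "corner (k * epoch_len) i = scale k"
  using epoch_len_gt_n n_ge_2 by (simp add: corner_def epoch_corner_def level_0)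

lemma corner_block_bounds: "1 \<le> corner_rl m \<and> corner_rl m \<le> corner_rh m \<and> corner_rh m \<le> n"
  unfolding corner_rl_def corner_rh_def using epoch_block_bounds epoch_len_gt_n by simp

lemma corner_in_block:
  "j \<in> {corner_rl m..corner_rh m} \<Longrightarrow> corner m j = level (m div epoch_len) (block_height (m mod epoch_len))"
  unfolding corner_def corner_rl_def corner_rh_def using epoch_len_gt_n by (simp add: epoch_corner_block)

lemma corner_Suc:
  assumes "i \<in> {1..n}"
  shows "corner (Suc m) i = (if i \<in> {corner_rl m..corner_rh m}
    then level (m div epoch_len) (Suc (block_height (m mod epoch_len))) else corner m i)"
  using Suc_div_mod_cases[OF epoch_len_pos, of m, case_names inside wrap]
proof cases
  case inside
  then show ?thesis using epoch_corner_Suc[OF inside(1) assms]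
    by (simp add: corner_def corner_rl_def corner_rh_def)
next
  case wrap
  then show ?thesis using epoch_corner_wrap[OF assms]
    by (simp add: corner_def corner_rl_def corner_rh_def)
qed

lemma corner_step:
  "\<exists>d>0. \<forall>i\<in>{1..n}. corner (Suc m) i = corner m i + d * slope (corner_rl m) (corner_rh m) i"
proof (rule block_raise_is_move[OF _ _ corner_Suc corner_in_block])
  show "corner_rl m \<le> corner_rh m" using corner_block_bounds by blast
  have "block_height (m mod epoch_len) < n"
    using block_height_less epoch_len_gt_n by simp
  then show "level (m div epoch_len) (block_height (m mod epoch_len))
      < level (m div epoch_len) (Suc (block_height (m mod epoch_len)))"
    by (intro level_less) auto
qed

lemma corner_block_changes: "(corner_rl m, corner_rh m) \<noteq> (corner_rl (Suc m), corner_rh (Suc m))"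
  using Suc_div_mod_cases[OF epoch_len_pos, of m, case_names inside wrap] n_ge_2
  by cases (auto simp: corner_rl_def corner_rh_def epoch_rl_def epoch_rh_def epoch_len_def)

lemma position_bound: "m mod epoch_len < 2 * n - 1"
  using epoch_len_gt_n by (simp add: epoch_len_def)

lemma corner_sorted: "1 \<le> i \<Longrightarrow> i < n \<Longrightarrow> corner m i \<le> corner m (Suc i)"
  unfolding corner_def epoch_corner_def using position_bound[of m]
  by (intro level_le) auto

lemma corner_pos: "i \<le> n \<Longrightarrow> corner m i > 0"
  unfolding corner_def epoch_corner_def using position_bound[of m]
  by (intro level_pos) auto

lemma epoch_merge_level:
  assumes "Suc p < epoch_len" "epoch_rl p < epoch_rh (Suc p)" "j \<in> {epoch_rl p..epoch_rh (Suc p)}"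
  shows "epoch_corner k (Suc p) j = epoch_corner k (Suc p) (epoch_rl p)"
proof -
  consider "Suc p < n" | "Suc p = n" | "n \<le> p" by linarith
  then show ?thesis
  proof cases
    case 1
    then have "min j (Suc p) = Suc p" "epoch_rl p = Suc p" using assms(3) by (auto simp: epoch_rl_def)
    then show ?thesis using 1 by (simp add: epoch_corner_def)
  next
    case 2
    then show ?thesis using assms(2) by (simp add: epoch_rl_def epoch_rh_def)
  next
    case 3
    then have "max j (Suc p - n + 1) = Suc p - n + 1" "epoch_rl p = 1"
      using assms(3) by (auto simp: epoch_rl_def epoch_rh_def)
    then show ?thesis using 3 by (simp add: epoch_corner_def)
  qed
qed

lemma corner_merge_level:
  assumes "corner_rl m < corner_rh (Suc m)" "j \<in> {corner_rl m..corner_rh (Suc m)}"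
  shows "corner (Suc m) j = corner (Suc m) (corner_rl m)"
  using Suc_div_mod_cases[OF epoch_len_pos, of m, case_names inside wrap]
proof cases
  case inside
  have "corner (Suc m) i = epoch_corner (m div epoch_len) (Suc (m mod epoch_len)) i" for i
    using inside by (simp add: corner_def)
  then show ?thesis
    using epoch_merge_level[OF inside(1), of j "m div epoch_len"] assms inside
    by (simp add: corner_rl_def corner_rh_def)
next
  case wrap
  then show ?thesis using n_ge_2 by (simp add: corner_def epoch_corner_def)
qed

lemma corner_sum_epoch_start: "(\<Sum>i=1..n. corner (k * epoch_len) i) = real n * scale k"
  by (simp add: corner_epoch_start)

lemma corner_sum_unbounded: "\<exists>m. x \<le> (\<Sum>i=1..n. corner m i)"
proof -
  obtain k :: nat where k: "x \<le> real k" using real_arch_simple by blast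
  have "scale k \<le> real n * scale k" using scale_pos[of k] n_ge_2 by simp
  then show ?thesis using corner_sum_epoch_start[of k] scale_bounds[of k] k
    by (intro exI[of _ "k * epoch_len"]) linarith
qed

sublocale corner_system n corner_rl corner_rh corner
proof
  show "0 \<le> corner m 1" for m using corner_pos[of 1 m] n_ge_2 by simp
  show "(\<Sum>i=1..n. corner 0 i) = 1" using corner_sum_epoch_start[of 0] n_ge_2 by simp
  show "corner m j = corner m (corner_rl m)" if "j \<in> {corner_rl m..corner_rh m}" for m j
    using corner_in_block[OF that] corner_in_block[of "corner_rl m" m] corner_block_bounds[of m]
    by simp
qed (fact corner_block_bounds corner_block_changes corner_sorted corner_step corner_sum_unbounded
       corner_merge_level)+

end

section \<open>Estimates along one epoch\<close>

lemma flat_top_share: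
  fixes V :: "nat \<Rightarrow> real"
  assumes "p < j" "j \<le> n"
    and nonneg: "\<And>i. 1 \<le> i \<Longrightarrow> i \<le> p \<Longrightarrow> 0 \<le> V i"
    and flat: "\<And>i. p < i \<Longrightarrow> i \<le> n \<Longrightarrow> V i = u"
  shows "real (j - p) / real (n - p) * (\<Sum>i=1..n. V i) \<le> (\<Sum>i=1..j. V i)"
proof -
  define N where "N = (\<Sum>i=1..j. V i)"
  have total: "(\<Sum>i=1..n. V i) = N + real (n - j) * u"
  proof -
    have "(\<Sum>i=1..n. V i) = N + (\<Sum>i=Suc j..n. V i)"
      using sum.atLeastLessThan_concat[of 1 "Suc j" "Suc n" V] assms(2)
      by (simp add: N_def atLeastLessThanSuc_atLeastAtMost)
    also have "(\<Sum>i=Suc j..n. V i) = (\<Sum>i=Suc j..n. u)" using assms(1) flat by (intro sum.cong) auto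
    finally show ?thesis by simp
  qed
  have "real (j - p) * u \<le> N"
  proof -
    have "N = (\<Sum>i=1..p. V i) + (\<Sum>i=Suc p..j. V i)"
      using sum.atLeastLessThan_concat[of 1 "Suc p" "Suc j" V] assms(1)
      by (simp add: N_def atLeastLessThanSuc_atLeastAtMost)
    moreover have "(\<Sum>i=Suc p..j. V i) = (\<Sum>i=Suc p..j. u)" using assms(2) flat by (intro sum.cong) auto
    moreover have "0 \<le> (\<Sum>i=1..p. V i)" using nonneg by (intro sum_nonneg) auto
    ultimately show ?thesis by simp
  qed
  then have "real (n - j) * (real (j - p) * u) \<le> real (n - j) * N" by (intro mult_left_mono) auto
  then have "real (j - p) * (N + real (n - j) * u) \<le> real (n - p) * N"
    using assms(1,2) by (simp add: of_nat_diff algebra_simps)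
  then show ?thesis unfolding total N_def using assms(1,2) by (simp add: divide_simps mult.commute)
qed

context epoch_construction begin

lemma dir_epoch: "p < epoch_len \<Longrightarrow> dir (k * epoch_len + p) i = slope (epoch_rl p) (epoch_rh p) i"
  by (simp add: dir_def corner_rl_def corner_rh_def)

lemma tau_epoch_start: "tau (k * epoch_len) = real n * scale k"
  unfolding tau_def by (rule corner_sum_epoch_start)

text \<open>Epochs start at equal coordinates, where \<open>psi j\<close> takes its maximal value \<open>j / n\<close>.\<close>
lemma corner_psi_epoch_start: "j \<le> n \<Longrightarrow> corner_psi j (k * epoch_len) = real j / real n"
  using scale_pos[of k] by (simp add: corner_psi_def tau_epoch_start corner_epoch_start)

lemma tau_epoch_ge: "real k \<le> tau (k * epoch_len + p)"
proof -
  have "scale k \<le> real n * scale k" using scale_pos[of k] n_ge_2 by simp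
  then show ?thesis
    using scale_bounds[of k] tau_le[of "k * epoch_len" "k * epoch_len + p"] tau_epoch_start[of k]
    by linarith
qed

lemma corner_psi_first_half:
  assumes j: "j \<le> n" and p: "p < n"
  shows "corner_psi j (Suc (k * epoch_len + p)) \<le> corner_psi j (k * epoch_len + p)"
proof (rule corner_psi_decreases[OF j])
  have pN: "p < epoch_len" using p epoch_len_gt_n by simp
  have dir: "dir (k * epoch_len + p) i = slope (p + 1) n i" for i
    using dir_epoch[OF pN] p by (simp add: epoch_rl_def epoch_rh_def)
  have V: "corner (k * epoch_len + p) i = level k (min i p)" for i
    using corner_epoch[OF pN] p by (simp add: epoch_corner_def)
  show "(\<Sum>i=1..j. dir (k * epoch_len + p) i) * tau (k * epoch_len + p)
          \<le> (\<Sum>i=1..j. corner (k * epoch_len + p) i)"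
  proof (cases "j \<le> p")
    case True
    then have "(\<Sum>i=1..j. dir (k * epoch_len + p) i) = 0" unfolding dir by (simp add: slope_def)
    moreover have "0 \<le> (\<Sum>i=1..j. corner (k * epoch_len + p) i)"
      using corner_pos j by (intro sum_nonneg) (simp add: less_imp_le)
    ultimately show ?thesis by simp
  next
    case False
    have "{1..j} \<inter> {p + 1..n} = {p + 1..j}" using False j by auto
    then have "(\<Sum>i=1..j. dir (k * epoch_len + p) i) = real (j - p) / real (n - p)"
      unfolding dir using sum_slope_initial[of "p + 1" n j] p j by simp
    moreover have "real (j - p) / real (n - p) * tau (k * epoch_len + p)
        \<le> (\<Sum>i=1..j. corner (k * epoch_len + p) i)"
      unfolding tau_def V
      by (rule flat_top_share) (use False j p level_pos in \<open>auto intro: less_imp_le\<close>)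
    ultimately show ?thesis by simp
  qed
qed

lemma corner_psi_second_half:
  assumes j: "j \<le> n" and p: "n \<le> p" "p < epoch_len"
  shows "corner_psi j (k * epoch_len + p) \<le> corner_psi j (Suc (k * epoch_len + p))"
proof (rule corner_psi_increases[OF j])
  define m where "m = k * epoch_len + p"
  define r where "r = epoch_rh p"
  have r: "1 \<le> r" "r \<le> n" "epoch_rl p = 1" using p epoch_block_bounds[of p] by (auto simp: r_def epoch_rl_def)
  have "{1..j} \<inter> {1..r} = {1..min j r}" by auto
  then have "(\<Sum>i=1..j. dir m i) = real (min j r) / real r"
    using dir_epoch[OF p(2)] sum_slope_initial[of 1 r j] r by (simp add: m_def r_def)
  then have share: "real j / real n \<le> (\<Sum>i=1..j. dir m i)"
    using r j by (cases "j \<le> r") (simp_all add: frac_le)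
  have "(\<Sum>i=1..j. corner m i) \<le> real j / real n * tau m"
    using corner_psi_le[OF j, of m] tau_ge_1[of m] n_ge_2 by (simp add: corner_psi_def divide_simps)
  also have "\<dots> \<le> (\<Sum>i=1..j. dir m i) * tau m" using share tau_ge_1[of m] by (intro mult_right_mono) auto
  finally show "(\<Sum>i=1..j. corner (k * epoch_len + p) i)
      \<le> (\<Sum>i=1..j. dir (k * epoch_len + p) i) * tau (k * epoch_len + p)"
    by (simp add: m_def)
qed

lemma corner_psi_middle_min:
  assumes j: "j \<le> n" and p: "p < epoch_len"
  shows "corner_psi j (k * epoch_len + n) \<le> corner_psi j (k * epoch_len + p)"
proof (cases "p \<le> n")
  case True
  then show ?thesis
  proof (induction p rule: inc_induct)
    case (step q)
    then show ?case using corner_psi_first_half[OF j step.hyps(2), of k] by simp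
  qed simp
next
  case False
  then have "n \<le> p" by simp
  then show ?thesis using p
  proof (induction p rule: dec_induct)
    case (step q)
    then show ?case using corner_psi_second_half[OF j step.hyps(1), of k] by simp
  qed simp
qed

lemma corner_psi_middle_min_Suc:
  assumes j: "j \<le> n" and p: "p < epoch_len"
  shows "corner_psi j (k * epoch_len + n) \<le> corner_psi j (Suc (k * epoch_len + p))"
proof (cases "p < n")
  case True
  then show ?thesis using corner_psi_middle_min[OF j, of "Suc p" k] epoch_len_gt_n by simp
next
  case False
  then show ?thesis
    using corner_psi_middle_min[OF j p, of k] corner_psi_second_half[OF j _ p, of k] by simp
qed

definition epoch :: "real \<Rightarrow> nat" where "epoch q = segment q div epoch_len"

lemma psi_P_ge_middle:
  assumes j: "j \<le> n" and q: "1 \<le> q"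
  shows "psi j (\<lambda>i. P i q / q) \<ge> corner_psi j (epoch q * epoch_len + n)"
proof -
  define m where "m = segment q"
  have m: "m = epoch q * epoch_len + m mod epoch_len" by (simp add: m_def epoch_def)
  have pm: "m mod epoch_len < epoch_len" using epoch_len_gt_n by simp
  have "corner_psi j (epoch q * epoch_len + n) \<le> min (corner_psi j m) (corner_psi j (Suc m))"
    using corner_psi_middle_min[OF j pm, of "epoch q"] corner_psi_middle_min_Suc[OF j pm, of "epoch q"]
    by (simp flip: m)
  then show ?thesis using psi_P_ge_segment_ends[OF j q] unfolding m_def by linarith
qed

lemma epoch_ge: assumes "tau (K * epoch_len) \<le> q" shows "K \<le> epoch q"
proof -
  have "K * epoch_len \<le> segment q" by (rule segment_ge[OF assms])
  then show ?thesis using epoch_len_gt_n by (simp add: epoch_def less_eq_div_iff_mult_less_eq)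
qed

text \<open>The middle corner is \<open>level k\<close>; its normalisation is a perturbation of \<open>a k\<close>, with
  \<open>base_sum\<close> the contribution of the term \<open>1 + i\<close> of \<open>level\<close>.\<close>
definition base_sum :: "nat \<Rightarrow> real" where "base_sum j = (\<Sum>i=1..j. 1 + real i)"

lemma base_sum_nonneg: "0 \<le> base_sum j"
  unfolding base_sum_def by (intro sum_nonneg) auto

lemma base_sum_mono: "j \<le> j' \<Longrightarrow> base_sum j \<le> base_sum j'"
  unfolding base_sum_def by (intro sum_mono2) auto

lemma corner_psi_middle:
  assumes j: "j \<le> n"
  shows "corner_psi j (k * epoch_len + n)
    = (base_sum j + (real k + 1) * psi j (a k)) / (base_sum n + (real k + 1))"
proof -
  have corner: "corner (k * epoch_len + n) i = level k i" if "1 \<le> i" for i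
    using corner_epoch[OF epoch_len_gt_n] that by (simp add: epoch_corner_def max_def)
  have sums: "(\<Sum>i=1..j. level k i) = scale k * (base_sum j + (real k + 1) * psi j (a k))" for j
    unfolding level_def base_sum_def psi_def by (simp add: sum_distrib_left sum.distrib algebra_simps)
  have "psi n (a k) = 1" using a_sum by (simp add: psi_def)
  then show ?thesis
    using corner sums[of j] sums[of n] scale_pos[of k] by (simp add: corner_psi_def tau_def)
qed

end

section \<open>Identifying the liminf and the limsup\<close>

text \<open>Two elementary bounds for the perturbed ratio \<open>(A + K \<psi>) / (C + K)\<close>, which is how
  \<open>corner_psi j\<close> at a middle corner depends on \<open>\<psi> = psi j (a k)\<close> with \<open>K = k + 1\<close>.\<close>
lemma perturbed_ratio_ge:
  fixes K C \<psi> A :: real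
  assumes "K > 0" "C \<ge> 0" "0 \<le> \<psi>" "\<psi> \<le> 1" "0 \<le> A"
  shows "\<psi> - C / K \<le> (A + K * \<psi>) / (C + K)"
proof -
  have "(\<psi> - C / K) * (C + K) = \<psi> * K + C * (\<psi> - 1) - C * C / K"
    using assms by (simp add: field_simps)
  also have "\<dots> \<le> A + K * \<psi>"
  proof -
    have "C * (\<psi> - 1) \<le> 0" "0 \<le> C * C / K" using assms by (simp_all add: mult_nonneg_nonpos)
    then show ?thesis using assms(5) by (simp add: mult.commute)
  qed
  finally show ?thesis using assms by (simp add: le_divide_eq)
qed

lemma perturbed_ratio_le:
  fixes K C \<psi> A :: real
  assumes "K > 0" "A \<le> C" "0 \<le> A" "0 \<le> \<psi>"
  shows "(A + K * \<psi>) / (C + K) \<le> \<psi> + C / K"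
proof -
  have "0 \<le> \<psi> * C" "0 \<le> C * C / K" using assms by simp_all
  then have "A + K * \<psi> \<le> K * \<psi> + C + \<psi> * C + C * C / K"
    using assms(2) by linarith
  also have "\<dots> = (\<psi> + C / K) * (C + K)"
    using assms by (simp add: field_simps)
  finally show ?thesis using assms by (simp add: divide_le_eq)
qed

lemma eventually_small_fraction:
  fixes C \<epsilon> :: real
  assumes "\<epsilon> > 0"
  shows "\<exists>K::nat. \<forall>k\<ge>K. C / (real k + 1) \<le> \<epsilon>"
proof -
  obtain K :: nat where K: "C / \<epsilon> \<le> real K" using real_arch_simple by blast
  have "C / (real k + 1) \<le> \<epsilon>" if "K \<le> k" for k
  proof -
    have "C \<le> \<epsilon> * real K" using K assms by (simp add: divide_le_eq mult.commute)
    also have "\<dots> \<le> \<epsilon> * (real k + 1)" using that assms by simp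
    finally show ?thesis by (simp add: divide_le_eq mult.commute)
  qed
  then show ?thesis by blast
qed

lemma frequently_at_top_along:
  fixes s :: "nat \<Rightarrow> real"
  assumes hits: "\<And>K. \<exists>k\<ge>K. R (s k)" and large: "\<And>k. real k \<le> s k"
  shows "\<exists>\<^sub>F q in at_top. R q"
  unfolding frequently_def eventually_at_top_linorder
proof
  assume "\<exists>Q. \<forall>q\<ge>Q. \<not> R q"
  then obtain Q where Q: "\<And>q. q \<ge> Q \<Longrightarrow> \<not> R q" by blast
  obtain K :: nat where K: "Q \<le> real K" using real_arch_simple by blast
  obtain k where "K \<le> k" "R (s k)" using hits by blast
  moreover have "real K \<le> real k" using \<open>K \<le> k\<close> by simp
  then have "Q \<le> s k" using K large[of k] by linarith
  ultimately show False using Q by blast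
qed

lemma Limsup_eqI_real:
  fixes f :: "'a \<Rightarrow> real"
  assumes "eventually (\<lambda>x. f x \<le> c) F" and "\<exists>\<^sub>F x in F. c \<le> f x"
  shows "Limsup F (\<lambda>x. ereal (f x)) = ereal c"
proof (rule antisym)
  show "Limsup F (\<lambda>x. ereal (f x)) \<le> ereal c"
    using assms(1) by (intro Limsup_bounded) (simp add: eventually_mono)
  show "ereal c \<le> Limsup F (\<lambda>x. ereal (f x))"
  proof (rule ccontr)
    assume "\<not> ?thesis"
    then have "eventually (\<lambda>x. ereal (f x) < ereal c) F" by (intro Limsup_lessD) simp
    then show False using assms(2) by (simp add: frequently_def eventually_mono not_le)
  qed
qed

lemma Liminf_eqI_real:
  fixes f :: "'a \<Rightarrow> real"
  assumes above: "\<And>\<epsilon>. \<epsilon> > 0 \<Longrightarrow> eventually (\<lambda>x. c - \<epsilon> \<le> f x) F"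
    and near: "\<And>\<epsilon>. \<epsilon> > 0 \<Longrightarrow> \<exists>\<^sub>F x in F. f x \<le> c + \<epsilon>"
  shows "Liminf F (\<lambda>x. ereal (f x)) = ereal c"
proof (rule antisym)
  show "ereal c \<le> Liminf F (\<lambda>x. ereal (f x))"
    unfolding le_Liminf_iff
  proof (intro allI impI)
    fix y assume "y < ereal c"
    then obtain r where r: "y < ereal r" "r < c" using ereal_dense2 less_ereal.simps(1) by metis
    show "\<forall>\<^sub>F x in F. y < ereal (f x)"
      using above[of "c - r"] r by (auto elim!: eventually_mono intro: less_le_trans)
  qed
  show "Liminf F (\<lambda>x. ereal (f x)) \<le> ereal c"
  proof (rule ccontr)
    assume "\<not> ?thesis"
    then obtain r where r: "ereal c < ereal r" "ereal r < Liminf F (\<lambda>x. ereal (f x))"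
      using ereal_dense2 not_le by (metis ereal_dense2 less_ereal.elims(2) ereal_less_eq(3) linorder_not_less)
    then have "c < r" by simp
    have "eventually (\<lambda>x. r < f x) F" using less_LiminfD[OF r(2)] by simp
    moreover have "\<exists>\<^sub>F x in F. f x \<le> c + (r - c) / 2" using near r(1) by simp
    ultimately have "\<exists>\<^sub>F x in F. r < f x \<and> f x \<le> c + (r - c) / 2"
      by (intro frequently_eventually_conj)
    then have "\<exists>\<^sub>F x in F. False" by (rule frequently_elim1) (use \<open>c < r\<close> in \<open>auto simp: field_simps\<close>)
    then show False by simp
  qed
qed

context epoch_construction begin

lemma psi_P_ge_a:
  assumes j: "j \<le> n" and q: "1 \<le> q"
  shows "psi j (a (epoch q)) - base_sum n / (real (epoch q) + 1) \<le> psi j (\<lambda>i. P i q / q)"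
proof -
  define k where "k = epoch q"
  have "psi j (a k) - base_sum n / (real k + 1)
      \<le> (base_sum j + (real k + 1) * psi j (a k)) / (base_sum n + (real k + 1))"
    using base_sum_nonneg psi_a_nonneg psi_a_le_1[OF j] by (intro perturbed_ratio_ge) auto
  also have "\<dots> \<le> psi j (\<lambda>i. P i q / q)"
    using psi_P_ge_middle[OF j q] corner_psi_middle[OF j] by (simp add: k_def)
  finally show ?thesis by (simp add: k_def)
qed

lemma psi_P_middle_le_a:
  fixes k :: nat
  assumes j: "j \<le> n"
  defines "q \<equiv> tau (k * epoch_len + n)"
  shows "psi j (\<lambda>i. P i q / q) \<le> psi j (a k) + base_sum n / (real k + 1)"
  unfolding q_def psi_P_tau[OF j] corner_psi_middle[OF j]
  using base_sum_nonneg base_sum_mono[OF j] psi_a_nonneg by (intro perturbed_ratio_le) auto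

text \<open>The limsup of \<open>psi j (P q / q)\<close> is \<open>j / n\<close>, attained at the starts of the epochs.\<close>
lemma Limsup_psi_P:
  assumes j: "j \<le> n"
  shows "Limsup at_top (\<lambda>q. ereal (psi j (\<lambda>i. P i q / q))) = ereal (real j / real n)"
proof (rule Limsup_eqI_real)
  show "\<forall>\<^sub>F q in at_top. psi j (\<lambda>i. P i q / q) \<le> real j / real n"
    using psi_P_le[OF j] by (auto simp: eventually_at_top_linorder)
  show "\<exists>\<^sub>F q in at_top. real j / real n \<le> psi j (\<lambda>i. P i q / q)"
    using psi_P_tau[OF j] corner_psi_epoch_start[OF j] tau_epoch_ge[of _ 0]
    by (intro frequently_at_top_along[where s="\<lambda>k. tau (k * epoch_len)"]) auto
qed

lemma Liminf_psi_P:
  assumes j: "j \<le> n"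
    and lower: "\<And>k. M \<le> psi j (a k)"
    and close: "\<And>K. \<exists>k\<ge>K. psi j (a k) < M + 1 / (real k + 1)"
  shows "Liminf at_top (\<lambda>q. ereal (psi j (\<lambda>i. P i q / q))) = ereal M"
proof (rule Liminf_eqI_real)
  fix \<epsilon> :: real assume \<epsilon>: "\<epsilon> > 0"
  obtain K where K: "\<And>k. k \<ge> K \<Longrightarrow> (1 + base_sum n) / (real k + 1) \<le> \<epsilon>"
    using eventually_small_fraction[OF \<epsilon>] by blast
  have "M - \<epsilon> \<le> psi j (\<lambda>i. P i q / q)" if q: "q \<ge> max 1 (tau (K * epoch_len))" for q
  proof -
    have "K \<le> epoch q" using epoch_ge q by simp
    then have "1 / (real (epoch q) + 1) + base_sum n / (real (epoch q) + 1) \<le> \<epsilon>"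
      using K[of "epoch q"] by (simp add: add_divide_distrib)
    moreover have "0 \<le> 1 / (real (epoch q) + 1)" by simp
    ultimately have "base_sum n / (real (epoch q) + 1) \<le> \<epsilon>" by linarith
    then show ?thesis using psi_P_ge_a[OF j, of q] lower[of "epoch q"] q by simp
  qed
  then show "\<forall>\<^sub>F q in at_top. M - \<epsilon> \<le> psi j (\<lambda>i. P i q / q)"
    unfolding eventually_at_top_linorder by blast
  have "\<exists>k\<ge>L. psi j (\<lambda>i. P i (tau (k * epoch_len + n)) / tau (k * epoch_len + n)) \<le> M + \<epsilon>" for L
  proof -
    obtain k where k: "max K L \<le> k" "psi j (a k) < M + 1 / (real k + 1)" using close by blast
    have "(1 + base_sum n) / (real k + 1) \<le> \<epsilon>" using K k(1) by simp
    then show ?thesis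
      using psi_P_middle_le_a[OF j, of k] k by (intro exI[of _ k]) (auto simp: add_divide_distrib)
  qed
  then show "\<exists>\<^sub>F q in at_top. psi j (\<lambda>i. P i q / q) \<le> M + \<epsilon>"
    using tau_epoch_ge by (intro frequently_at_top_along[where s="\<lambda>k. tau (k * epoch_len + n)"]) auto
qed

end

text \<open>A sequence in \<open>E\<close> along which each of finitely many functions \<open>g j\<close> comes within
  \<open>1/(k+1)\<close> of its infimum for infinitely many \<open>k\<close>: cycle through \<open>j = k mod n + 1\<close>.\<close>
lemma approximating_sequence:
  fixes g :: "nat \<Rightarrow> 'a \<Rightarrow> real"
  assumes "E \<noteq> {}"
  shows "\<exists>a. (\<forall>k. a k \<in> E) \<and>
    (\<forall>j\<in>{1..n}. \<forall>K. \<exists>k\<ge>K. g j (a k) < Inf (g j ` E) + 1 / (real k + 1))"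
proof -
  have "\<exists>e\<in>E. g (k mod n + 1) e < Inf (g (k mod n + 1) ` E) + 1 / (real k + 1)" for k
    using cInf_lessD[of "g (k mod n + 1) ` E"] assms by force
  then obtain a where a: "\<And>k. a k \<in> E \<and>
      g (k mod n + 1) (a k) < Inf (g (k mod n + 1) ` E) + 1 / (real k + 1)"
    by metis
  have "\<exists>k\<ge>K. g j (a k) < Inf (g j ` E) + 1 / (real k + 1)" if j: "j \<in> {1..n}" for j K
  proof -
    obtain i where i: "j = Suc i" "i < n" using j by (cases j) auto
    define k where "k = n * K + i"
    have "k mod n + 1 = j" using i by (simp add: k_def)
    moreover have "1 * K \<le> n * K" using i by (intro mult_le_mono1) simp
    then have "K \<le> k" unfolding k_def by linarith
    ultimately show ?thesis using a[of k] by auto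
  qed
  then show ?thesis using a by blast
qed

theorem mainTheorem10:
  fixes n :: nat and E :: "(nat \<Rightarrow> real) set"
  assumes "n \<ge> 2" and "E \<noteq> {}" and "E \<subseteq> closedDelta n"
  shows "\<exists>P. gen_n_system n {1..} P \<and>
    (\<forall>j\<in>{1..n}.
       Liminf at_top (\<lambda>q. ereal (psi j (\<lambda>i. P i q / q))) = ereal (Inf (psi j ` E)) \<and>
       Limsup at_top (\<lambda>q. ereal (psi j (\<lambda>i. P i q / q))) = ereal (real j / real n))"
proof -
  obtain a where aE: "\<And>k. a k \<in> E"
    and close: "\<And>j K. j \<in> {1..n} \<Longrightarrow> \<exists>k\<ge>K. psi j (a k) < Inf (psi j ` E) + 1 / (real k + 1)"
    using approximating_sequence[OF assms(2), of n psi] by blast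
  interpret epoch_construction n a
    using assms(1,3) aE by unfold_locales auto
  show ?thesis
  proof (intro exI[of _ P] conjI ballI gen_n_system)
    fix j assume j: "j \<in> {1..n}"
    have "bdd_below (psi j ` E)"
      using assms(3) psi_nonneg_closedDelta by (intro bdd_belowI[of _ 0]) blast
    then have "Inf (psi j ` E) \<le> psi j (a k)" for k using aE by (intro cInf_lower) auto
    then show "Liminf at_top (\<lambda>q. ereal (psi j (\<lambda>i. P i q / q))) = ereal (Inf (psi j ` E))"
      using Liminf_psi_P close[OF j] j by simp
    show "Limsup at_top (\<lambda>q. ereal (psi j (\<lambda>i. P i q / q))) = ereal (real j / real n)"
      using Limsup_psi_P j by simp
  qed
qed

end
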